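(* Let $(X,d,\mu)$ be a metric measure space, $Y$ a complete metric space, $p\ge1$ and $u\in N^{1,p}_{loc}(X,Y)$. Then $p$-almost every Lipschitz curve $\gamma:[0,1]\to X$ is $(u,p)$-regular.
   Context: A metric measure space is a proper metric space with a Borel regular outer measure positive and finite on balls. $\operatorname{Mod}_p\Gamma=\inf\int\rho^pd\mu$ over Borel $\rho\ge0$ with $\int_\gamma\rho\ge1$ on $\Gamma$; "$p$-almost every curve" means outside a family of $p$-modulus zero. $N^{1,p}_{loc}(X,Y)$ is the space of locally $p$-Newtonian maps (defined via an isometric embedding of $Y$ into a Banach space). Let $\overline\Gamma(X)$ be the set of Lipschitz curves $[0,1]\to X$ with the metric $d_\infty(\alpha,\beta)=\sup_{t}d(\alpha(t),\beta(t))$, and $B(\gamma,\delta)$ the open $d_\infty$-ball in $\overline\Gamma(X)$. For $\Gamma\subset\overline\Gamma(X)$, $ess\ell_{u,p}(\Gamma):=\sup_{\operatorname{Mod}_p\Gamma_0=0}\inf\{\ell(u\circ\gamma):\gamma\in\Gamma\setminus\Gamma_0\}$, $\inf\emptyset=\infty$. A curve $\gamma\in\overline\Gamma(X)$ is $(u,p)$-regular if $u\circ\gamma$ is absolutely continuous and $ess\ell_{u,p}B(\gamma,\delta)\le\ell(u\circ\gamma)$ for every $\delta>0$. *)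

theory Defs
  imports "HOL-Analysis.Analysis"
begin

text \<open>The space X is the whole type 'a. The measure mu is (the Borel restriction of)
 a Borel regular outer measure; mu-measurable sets are those of the completion.\<close>

definition proper_space :: "'a::metric_space itself \<Rightarrow> bool" where
  "proper_space _ \<longleftrightarrow> (\<forall>S::'a set. bounded S \<and> closed S \<longrightarrow> compact S)"

definition metric_measure_space :: "'a::metric_space measure \<Rightarrow> bool" where
  "metric_measure_space \<mu> \<longleftrightarrow> proper_space TYPE('a) \<and> sets \<mu> = sets borel \<and>
     (\<forall>x r. r > 0 \<longrightarrow> 0 < emeasure \<mu> (ball x r) \<and> emeasure \<mu> (ball x r) < \<infinity>)"

definition enn_powr :: "ennreal \<Rightarrow> real \<Rightarrow> ennreal" where
  "enn_powr x q = (if x = \<infinity> then \<infinity> else ennreal (enn2real x powr q))"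

text \<open>Lipschitz curves [0,1] -> X (values outside [0,1] are irrelevant).\<close>
definition lip_curve :: "(real \<Rightarrow> 'a::metric_space) \<Rightarrow> bool" where
  "lip_curve \<gamma> \<longleftrightarrow> (\<exists>L. L-lipschitz_on {0..1} \<gamma>)"

definition curve_length :: "real \<Rightarrow> real \<Rightarrow> (real \<Rightarrow> 'b::metric_space) \<Rightarrow> ennreal" where
  "curve_length a b c =
     (SUP nt \<in> {(n::nat, t::nat \<Rightarrow> real). t 0 = a \<and> t n = b \<and> (\<forall>i<n. t i \<le> t (Suc i))}.
        \<Sum>i<fst nt. ennreal (dist (c (snd nt (Suc i))) (c (snd nt i))))"

definition abs_continuous_on :: "real set \<Rightarrow> (real \<Rightarrow> 'b::metric_space) \<Rightarrow> bool" where
  "abs_continuous_on S c \<longleftrightarrow>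
     (\<forall>\<epsilon>>0. \<exists>\<delta>>0. \<forall>(n::nat) (a::nat \<Rightarrow> real) b.
        (\<forall>i<n. a i \<le> b i \<and> {a i..b i} \<subseteq> S) \<and>
        disjoint_family_on (\<lambda>i. {a i<..<b i}) {..<n} \<and>
        (\<Sum>i<n. b i - a i) < \<delta>
        \<longrightarrow> (\<Sum>i<n. dist (c (b i)) (c (a i))) < \<epsilon>)"

text \<open>Metric derivative (the limit exists a.e. for Lipschitz curves; limsup is used so
 that the definition is total).\<close>
definition metric_deriv :: "(real \<Rightarrow> 'a::metric_space) \<Rightarrow> real \<Rightarrow> ennreal" where
  "metric_deriv \<gamma> t = Limsup (at t within {0..1}) (\<lambda>s. ennreal (dist (\<gamma> s) (\<gamma> t) / \<bar>s - t\<bar>))"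

definition line_integral :: "('a::metric_space \<Rightarrow> ennreal) \<Rightarrow> (real \<Rightarrow> 'a) \<Rightarrow> ennreal" where
  "line_integral \<rho> \<gamma> = (\<integral>\<^sup>+ t \<in> {0..1}. \<rho> (\<gamma> t) * metric_deriv \<gamma> t \<partial>lborel)"

definition modulus :: "'a::metric_space measure \<Rightarrow> real \<Rightarrow> (real \<Rightarrow> 'a) set \<Rightarrow> ennreal" where
  "modulus \<mu> p \<Gamma> = (INF \<rho> \<in> {\<rho>. \<rho> \<in> borel_measurable borel \<and> (\<forall>\<gamma>\<in>\<Gamma>. 1 \<le> line_integral \<rho> \<gamma>)}.
       \<integral>\<^sup>+ x. enn_powr (\<rho> x) p \<partial>\<mu>)"

definition strongly_measurable :: "'a measure \<Rightarrow> ('a \<Rightarrow> 'c::real_normed_vector) \<Rightarrow> bool" where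
  "strongly_measurable M f \<longleftrightarrow>
     (\<exists>s::nat \<Rightarrow> 'a \<Rightarrow> 'c. (\<forall>n. finite (s n ` space M) \<and> (\<forall>v. s n -` {v} \<inter> space M \<in> sets M)) \<and>
        (AE x in M. (\<lambda>n. s n x) \<longlonglongrightarrow> f x))"

text \<open>rho is an upper gradient of f on U: for all (Lipschitz, equivalently rectifiable) curves in U.\<close>
definition upper_gradient :: "'a::metric_space set \<Rightarrow> ('a \<Rightarrow> 'c::metric_space) \<Rightarrow> ('a \<Rightarrow> ennreal) \<Rightarrow> bool" where
  "upper_gradient U f \<rho> \<longleftrightarrow>
     (\<forall>\<gamma>. lip_curve \<gamma> \<and> \<gamma> ` {0..1} \<subseteq> U \<longrightarrow> ennreal (dist (f (\<gamma> 1)) (f (\<gamma> 0))) \<le> line_integral \<rho> \<gamma>)"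

text \<open>f in N^{1,p}(U,V), V a Banach space (the function class, not equivalence classes).\<close>
definition newtonian :: "'a::metric_space measure \<Rightarrow> real \<Rightarrow> 'a set \<Rightarrow> ('a \<Rightarrow> 'c::banach) \<Rightarrow> bool" where
  "newtonian \<mu> p U f \<longleftrightarrow>
     strongly_measurable (restrict_space (completion \<mu>) U) f \<and>
     (\<integral>\<^sup>+ x \<in> U. enn_powr (ennreal (norm (f x))) p \<partial>completion \<mu>) < \<infinity> \<and>
     (\<exists>\<rho>. \<rho> \<in> borel_measurable borel \<and> upper_gradient U f \<rho> \<and>
          (\<integral>\<^sup>+ x \<in> U. enn_powr (\<rho> x) p \<partial>\<mu>) < \<infinity>)"

definition newtonian_loc :: "'a::metric_space measure \<Rightarrow> real \<Rightarrow> ('a \<Rightarrow> 'c::banach) \<Rightarrow> bool" where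
  "newtonian_loc \<mu> p f \<longleftrightarrow> (\<forall>x. \<exists>r>0. newtonian \<mu> p (ball x r) f)"

definition isometric :: "('b::metric_space \<Rightarrow> 'c::metric_space) \<Rightarrow> bool" where
  "isometric \<iota> \<longleftrightarrow> (\<forall>a b. dist (\<iota> a) (\<iota> b) = dist a b)"

definition curve_ball :: "(real \<Rightarrow> 'a::metric_space) \<Rightarrow> real \<Rightarrow> (real \<Rightarrow> 'a) set" where
  "curve_ball \<gamma> \<delta> = {\<beta>. lip_curve \<beta> \<and> (SUP t\<in>{0..1}. dist (\<gamma> t) (\<beta> t)) < \<delta>}"

definition ess_length :: "'a::metric_space measure \<Rightarrow> real \<Rightarrow> ('a \<Rightarrow> 'b::metric_space) \<Rightarrow> (real \<Rightarrow> 'a) set \<Rightarrow> ennreal" where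
  "ess_length \<mu> p u \<Gamma> = (SUP \<Gamma>0 \<in> {\<Gamma>0. modulus \<mu> p \<Gamma>0 = 0}.
       INF \<gamma> \<in> \<Gamma> - \<Gamma>0. curve_length 0 1 (u \<circ> \<gamma>))"

definition regular_curve :: "'a::metric_space measure \<Rightarrow> real \<Rightarrow> ('a \<Rightarrow> 'b::metric_space) \<Rightarrow> (real \<Rightarrow> 'a) \<Rightarrow> bool" where
  "regular_curve \<mu> p u \<gamma> \<longleftrightarrow> lip_curve \<gamma> \<and> abs_continuous_on {0..1} (u \<circ> \<gamma>) \<and>
     (\<forall>\<delta>>0. ess_length \<mu> p u (curve_ball \<gamma> \<delta>) \<le> curve_length 0 1 (u \<circ> \<gamma>))"

end

theory Submission
  imports Defs
begin

text \<open>Two families of modulus zero are removed.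

Cover X by countably many balls carrying p-integrable upper gradients \<open>g\<close> of \<open>\<iota> \<circ> u\<close>. The
curves along which some \<open>g\<close> has infinite line integral form a null family, since every
\<open>k g\<close> is admissible for them while \<open>\<integral> (k g)\<^sup>p\<close> is arbitrarily small. Along any other curve,
a Lebesgue number of the cover splits [0,1] into short subarcs lying in single balls, where
the upper gradient inequality bounds the oscillation of \<open>u \<circ> \<gamma>\<close> by the integral of one fixed
integrable function; absolute continuity of the integral makes \<open>u \<circ> \<gamma>\<close> absolutely continuous.

X is separable, so countably many grid boxes (curves with Lipschitz constant L passing near
prescribed points of a countable dense set at the times k/N) cover all Lipschitz curves, and
every curve has boxes around it inside any prescribed uniform neighbourhood. Remove every null
family of the form {\<beta> in a box : \<open>\<ell>(u \<circ> \<beta>) < q\<close>}, q rational. If the essential length of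
\<open>B(\<gamma>,\<delta>)\<close> exceeded \<open>\<ell>(u \<circ> \<gamma>)\<close>, a rational q in between and a box around \<gamma> inside \<open>B(\<gamma>,\<delta>)\<close>
would give such a null family containing \<gamma>.\<close>

lemma enn_powr_mono:
  assumes "x \<le> y" "p \<ge> 0" shows "enn_powr x p \<le> enn_powr y p"
proof (cases "y = \<infinity>")
  case True then show ?thesis by (simp add: enn_powr_def)
next
  case False
  then have "x \<noteq> \<infinity>" using assms top.extremum_unique by fastforce
  moreover have "enn2real x \<le> enn2real y" using assms False by (simp add: enn2real_mono top.not_eq_extremum)
  ultimately show ?thesis using False assms
    by (simp add: enn_powr_def powr_mono2)
qed

lemma enn_powr_zero [simp]: "p > 0 \<Longrightarrow> enn_powr 0 p = 0"
  by (simp add: enn_powr_def)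

lemma enn_powr_measurable [measurable]:
  assumes [measurable]: "f \<in> borel_measurable M" shows "(\<lambda>x. enn_powr (f x) p) \<in> borel_measurable M"
  unfolding enn_powr_def by measurable

lemma enn_powr_mult_indicator:
  "p > 0 \<Longrightarrow> enn_powr (f x * indicator A x) p = enn_powr (f x) p * indicator A x"
  by (simp add: indicator_def)

lemma enn_powr_cmult:
  assumes "k > 0" "p > 0"
  shows "enn_powr (ennreal k * y) p = ennreal (k powr p) * enn_powr y p"
proof (cases "y = \<infinity>")
  case True
  then show ?thesis using assms by (simp add: enn_powr_def ennreal_mult_top)
next
  case False
  then obtain r where "r \<ge> 0" "y = ennreal r" by (cases y) auto
  then show ?thesis using assms
    by (simp add: enn_powr_def powr_mult ennreal_mult[symmetric] del: ennreal_mult')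
qed

lemma enn_powr_SUP_le_suminf:
  fixes a :: "nat \<Rightarrow> ennreal"
  assumes p: "p > 0"
  shows "enn_powr (SUP i. a i) p \<le> (\<Sum>i. enn_powr (a i) p)"
proof (cases "(\<Sum>i. enn_powr (a i) p) = \<infinity>")
  case True then show ?thesis by simp
next
  case False
  define S where "S = (\<Sum>i. enn_powr (a i) p)"
  have Sfin: "S \<noteq> \<infinity>" using False S_def by auto
  define s where "s = enn2real S"
  have Ss: "S = ennreal s" "s \<ge> 0" using Sfin unfolding s_def by (cases S; simp)+
  have le: "enn_powr (a i) p \<le> S" for i unfolding S_def
    using ennreal_suminf_lessD linorder_not_less by blast
  have ai: "a i \<le> ennreal (s powr (1/p))" for i
  proof -
    have "a i \<noteq> \<infinity>" using le[of i] Sfin by (auto simp: enn_powr_def top_unique)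
    then obtain r where r: "r \<ge> 0" "a i = ennreal r" by (cases "a i") auto
    have "r powr p \<le> s" using le[of i] r Ss by (simp add: enn_powr_def)
    then have "(r powr p) powr (1/p) \<le> s powr (1/p)" using r p by (simp add: powr_mono2)
    then have "r \<le> s powr (1/p)" using r p by (simp add: powr_powr)
    then show ?thesis using r by simp
  qed
  then have "(SUP i. a i) \<le> ennreal (s powr (1/p))" by (simp add: SUP_le_iff)
  then have "enn_powr (SUP i. a i) p \<le> enn_powr (ennreal (s powr (1/p))) p"
    using p by (intro enn_powr_mono) auto
  also have "\<dots> = ennreal s" using p Ss by (simp add: enn_powr_def powr_powr)
  finally show ?thesis using Ss S_def by simp
qed

lemma line_integral_mono:
  assumes "\<And>x. \<rho> x \<le> \<rho>' x" shows "line_integral \<rho> \<gamma> \<le> line_integral \<rho>' \<gamma>"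
  unfolding line_integral_def
  by (intro nn_integral_mono mult_right_mono assms) auto

lemma modulus_le_admissible:
  assumes "\<rho> \<in> borel_measurable borel" "\<And>\<gamma>. \<gamma> \<in> \<Gamma> \<Longrightarrow> 1 \<le> line_integral \<rho> \<gamma>"
  shows "modulus \<mu> p \<Gamma> \<le> (\<integral>\<^sup>+ x. enn_powr (\<rho> x) p \<partial>\<mu>)"
  unfolding modulus_def using assms by (intro INF_lower) auto

lemma modulus_mono:
  assumes "\<Gamma> \<subseteq> \<Gamma>'" shows "modulus \<mu> p \<Gamma> \<le> modulus \<mu> p \<Gamma>'"
  unfolding modulus_def using assms by (intro INF_superset_mono) auto

lemma modulus_eq_0D:
  assumes "modulus \<mu> p \<Gamma> = 0" "e > 0"
  obtains \<rho> where "\<rho> \<in> borel_measurable borel" "\<And>\<gamma>. \<gamma> \<in> \<Gamma> \<Longrightarrow> 1 \<le> line_integral \<rho> \<gamma>"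
    "(\<integral>\<^sup>+ x. enn_powr (\<rho> x) p \<partial>\<mu>) < e"
proof -
  have "modulus \<mu> p \<Gamma> < e" using assms by simp
  then show ?thesis unfolding modulus_def INF_less_iff using that by auto
qed

lemma modulus_eq_0I:
  assumes "\<And>e::real. e > 0 \<Longrightarrow> \<exists>\<rho>. \<rho> \<in> borel_measurable borel \<and> (\<forall>\<gamma>\<in>\<Gamma>. 1 \<le> line_integral \<rho> \<gamma>) \<and>
    (\<integral>\<^sup>+ x. enn_powr (\<rho> x) p \<partial>\<mu>) \<le> ennreal e"
  shows "modulus \<mu> p \<Gamma> = 0"
proof -
  have "modulus \<mu> p \<Gamma> \<le> 0"
  proof (rule ennreal_le_epsilon)
    fix e :: real assume "0 < e"
    then obtain \<rho> where "\<rho> \<in> borel_measurable borel" "\<forall>\<gamma>\<in>\<Gamma>. 1 \<le> line_integral \<rho> \<gamma>"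
      "(\<integral>\<^sup>+ x. enn_powr (\<rho> x) p \<partial>\<mu>) \<le> ennreal e" using assms by blast
    then show "modulus \<mu> p \<Gamma> \<le> 0 + ennreal e"
      using modulus_le_admissible[of \<rho> \<Gamma> \<mu> p] by (simp add: order_trans)
  qed
  then show ?thesis by simp
qed

lemma modulus_empty: "p > 0 \<Longrightarrow> modulus \<mu> p {} = 0"
  by (rule modulus_eq_0I) (auto intro!: exI[of _ "\<lambda>_. 0"])

text \<open>The supremum of admissible functions for the pieces, chosen with p-integrals below
 \<open>e / 2^(i+1)\<close>, is admissible for the union.\<close>

lemma modulus_UN_eq_0:
  assumes sets: "sets \<mu> = sets borel" and p: "p > 0" and null: "\<And>i::nat. modulus \<mu> p (\<Gamma> i) = 0"
  shows "modulus \<mu> p (\<Union>i. \<Gamma> i) = 0"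
proof (rule modulus_eq_0I)
  fix e :: real assume e: "e > 0"
  have "\<exists>\<rho>. \<rho> \<in> borel_measurable borel \<and> (\<forall>\<gamma>\<in>\<Gamma> i. 1 \<le> line_integral \<rho> \<gamma>) \<and>
      (\<integral>\<^sup>+ x. enn_powr (\<rho> x) p \<partial>\<mu>) < ennreal (e * (1/2)^Suc i)" for i
    by (rule modulus_eq_0D[OF null[of i], where e="ennreal (e * (1/2)^Suc i)"]) (use e in auto)
  then obtain \<rho> where \<rho>: "\<And>i. \<rho> i \<in> borel_measurable borel" "\<And>i. \<forall>\<gamma>\<in>\<Gamma> i. 1 \<le> line_integral (\<rho> i) \<gamma>"
    "\<And>i. (\<integral>\<^sup>+ x. enn_powr (\<rho> i x) p \<partial>\<mu>) < ennreal (e * (1/2)^Suc i)"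
    by metis
  define R where "R x = (SUP i. \<rho> i x)" for x
  have "R \<in> borel_measurable borel" unfolding R_def using \<rho>(1) by measurable
  moreover have "1 \<le> line_integral R \<gamma>" if \<gamma>: "\<gamma> \<in> (\<Union>i. \<Gamma> i)" for \<gamma>
  proof -
    obtain i where "\<gamma> \<in> \<Gamma> i" using \<gamma> by auto
    then have "1 \<le> line_integral (\<rho> i) \<gamma>" using \<rho>(2) by auto
    also have "\<dots> \<le> line_integral R \<gamma>" by (rule line_integral_mono) (auto simp: R_def intro: SUP_upper)
    finally show ?thesis .
  qed
  moreover have "(\<integral>\<^sup>+ x. enn_powr (R x) p \<partial>\<mu>) \<le> ennreal e"
  proof -
    have [measurable]: "(\<lambda>x. enn_powr (\<rho> i x) p) \<in> borel_measurable \<mu>" for i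
      using \<rho>(1) by (subst measurable_cong_sets[OF sets refl]) measurable
    have "(\<integral>\<^sup>+ x. enn_powr (R x) p \<partial>\<mu>) \<le> (\<integral>\<^sup>+ x. (\<Sum>i. enn_powr (\<rho> i x) p) \<partial>\<mu>)"
      unfolding R_def by (rule nn_integral_mono) (rule enn_powr_SUP_le_suminf[OF p])
    also have "\<dots> = (\<Sum>i. \<integral>\<^sup>+ x. enn_powr (\<rho> i x) p \<partial>\<mu>)"
      by (rule nn_integral_suminf) measurable
    also have "\<dots> \<le> (\<Sum>i. ennreal (e * (1/2)^Suc i))"
      by (intro suminf_le summableI less_imp_le \<rho>(3))
    also have "\<dots> = ennreal (\<Sum>i. e * (1/2)^Suc i)"
      using e by (intro suminf_ennreal2) (auto intro!: summable_mult sums_summable[OF power_half_series])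
    also have "(\<Sum>i. e * (1/2)^Suc i) = e"
      using sums_mult[OF power_half_series, of e] by (simp add: sums_iff)
    finally show ?thesis .
  qed
  ultimately show "\<exists>\<rho>. \<rho> \<in> borel_measurable borel \<and> (\<forall>\<gamma>\<in>(\<Union>i. \<Gamma> i). 1 \<le> line_integral \<rho> \<gamma>) \<and>
    (\<integral>\<^sup>+ x. enn_powr (\<rho> x) p \<partial>\<mu>) \<le> ennreal e" by blast
qed

lemma modulus_UN_countable_eq_0:
  assumes sets: "sets \<mu> = sets borel" and p: "p > 0" and I: "countable I"
    and null: "\<And>i. i \<in> I \<Longrightarrow> modulus \<mu> p (\<Gamma> i) = 0"
  shows "modulus \<mu> p (\<Union>i\<in>I. \<Gamma> i) = 0"
proof (cases "I = {}")
  case True then show ?thesis using modulus_empty p by simp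
next
  case False
  have "(\<Union>i\<in>I. \<Gamma> i) = (\<Union>n. \<Gamma> (from_nat_into I n))"
  proof -
    have "\<Gamma> ` I = \<Gamma> ` range (from_nat_into I)" using range_from_nat_into[OF False I] by simp
    then show ?thesis by (simp add: image_image)
  qed
  also have "modulus \<mu> p \<dots> = 0"
    by (rule modulus_UN_eq_0[OF sets p]) (simp add: null False from_nat_into)
  finally show ?thesis .
qed

lemma modulus_Un_eq_0:
  assumes "sets \<mu> = sets borel" "p > 0" "modulus \<mu> p \<Gamma> = 0" "modulus \<mu> p \<Gamma>' = 0"
  shows "modulus \<mu> p (\<Gamma> \<union> \<Gamma>') = 0"
proof -
  have "modulus \<mu> p (\<Union>i\<in>{\<Gamma>, \<Gamma>'}. i) = 0"
    by (rule modulus_UN_countable_eq_0) (use assms in auto)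
  then show ?thesis by simp
qed

lemma lip_curve_continuous_on: "lip_curve \<gamma> \<Longrightarrow> continuous_on {0..1} \<gamma>"
  unfolding lip_curve_def using lipschitz_on_continuous_on by blast

definition local_dilatation :: "(real \<Rightarrow> 'a::metric_space) \<Rightarrow> real \<Rightarrow> real \<Rightarrow> ennreal" where
  "local_dilatation c e t = (SUP s\<in>{0..1} \<inter> ball t e - {t}. ennreal (dist (c s) (c t) / \<bar>s - t\<bar>))"

lemma metric_deriv_eq_INF_local_dilatation:
  "metric_deriv c t = (INF e\<in>{0<..}. local_dilatation c e t)"
  unfolding metric_deriv_def local_dilatation_def by (rule Limsup_within)

lemma local_dilatation_mono: "e \<le> e' \<Longrightarrow> local_dilatation c e t \<le> local_dilatation c e' t"
  unfolding local_dilatation_def by (rule SUP_subset_mono) auto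

lemma metric_deriv_eq_INF_nat: "metric_deriv c t = (INF n. local_dilatation c (1 / Suc n) t)"
proof (rule antisym)
  show "metric_deriv c t \<le> (INF n. local_dilatation c (1 / Suc n) t)"
    unfolding metric_deriv_eq_INF_local_dilatation by (intro INF_greatest INF_lower) auto
  show "(INF n. local_dilatation c (1 / Suc n) t) \<le> metric_deriv c t"
    unfolding metric_deriv_eq_INF_local_dilatation
  proof (intro INF_greatest)
    fix e :: real assume "e \<in> {0<..}"
    then obtain n where "1 / real (Suc n) < e" using nat_approx_posE by auto
    then have "(INF n. local_dilatation c (1 / Suc n) t) \<le> local_dilatation c (1 / Suc n) t"
      by (intro INF_lower) auto
    also have "\<dots> \<le> local_dilatation c e t" using \<open>1 / real (Suc n) < e\<close> by (intro local_dilatation_mono) simp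
    finally show "(INF n. local_dilatation c (1 / Suc n) t) \<le> local_dilatation c e t" .
  qed
qed

lemma open_local_dilatation_gt:
  assumes c: "continuous_on UNIV c"
  shows "open {t. a < local_dilatation c e t}"
proof -
  have eq: "{t. a < local_dilatation c e t} =
      (\<Union>s\<in>{0..1}. (\<lambda>t. ennreal (dist (c s) (c t) / \<bar>s - t\<bar>)) -` {a<..} \<inter> (ball s e - {s}))"
    unfolding local_dilatation_def less_SUP_iff by (auto simp: dist_commute)
  moreover have "open ((\<lambda>t. ennreal (dist (c s) (c t) / \<bar>s - t\<bar>)) -` {a<..} \<inter> (ball s e - {s}))" for s
  proof -
    have "continuous_on (ball s e - {s}) (\<lambda>t. ennreal (dist (c s) (c t) / \<bar>s - t\<bar>))"
      by (intro continuous_on_ennreal continuous_intros continuous_on_subset[OF c]) auto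
    moreover have "open (ball s e - {s})" by auto
    ultimately show ?thesis
      using continuous_on_open_vimage open_greaterThan by blast
  qed
  then show ?thesis unfolding eq by (intro open_UN) blast
qed

lemma borel_measurable_metric_deriv:
  assumes "continuous_on UNIV c" shows "metric_deriv c \<in> borel_measurable borel"
proof -
  have [measurable]: "(\<lambda>t. local_dilatation c e t) \<in> borel_measurable borel" for e
    using assms by (intro borel_measurableI_greater) (simp add: open_local_dilatation_gt borel_open)
  show ?thesis unfolding metric_deriv_eq_INF_nat[abs_def] by measurable
qed

text \<open>Curves only matter on [0,1]; composing with \<open>clamp\<close> makes them continuous on all of \<real>
 without changing their metric derivative there.\<close>

lemma metric_deriv_clamp:
  "t \<in> {0..1} \<Longrightarrow> metric_deriv (\<lambda>s. \<gamma> (clamp 0 1 s)) t = metric_deriv \<gamma> t"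
  unfolding metric_deriv_def by (rule Limsup_eq) (auto simp: eventually_at_filter)

lemma line_integrand_measurable:
  assumes "lip_curve \<gamma>" and [measurable]: "\<rho> \<in> borel_measurable borel" "S \<in> sets borel"
    and "S \<subseteq> {0..1}"
  shows "(\<lambda>t. \<rho> (\<gamma> t) * metric_deriv \<gamma> t * indicator S t) \<in> borel_measurable borel"
proof -
  define c where "c s = \<gamma> (clamp 0 1 s)" for s
  have "continuous_on (cbox 0 1) \<gamma>"
    using lip_curve_continuous_on[OF assms(1)] by (simp add: cbox_interval)
  then have "isCont c s" for s unfolding c_def by (rule clamp_continuous_at)
  then have "continuous_on UNIV c" by (simp add: continuous_at_imp_continuous_on)
  then have [measurable]: "c \<in> borel_measurable borel" "metric_deriv c \<in> borel_measurable borel"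
    by (auto intro: borel_measurable_continuous_onI borel_measurable_metric_deriv)
  have "\<rho> (\<gamma> t) * metric_deriv \<gamma> t * indicator S t = \<rho> (c t) * metric_deriv c t * indicator S t" for t
  proof (cases "t \<in> S")
    case True
    then have "t \<in> cbox 0 1" using assms(4) by (auto simp: cbox_interval)
    then show ?thesis unfolding c_def by (simp add: metric_deriv_clamp cbox_interval)
  qed simp
  then show ?thesis by simp
qed

lemma filtermap_affine_at:
  fixes a c :: real assumes "c \<noteq> 0"
  shows "filtermap (\<lambda>s. a + c * s) (at s) = at (a + c * s)"
proof -
  have bij: "bij (\<lambda>s. a + c * s)"
    using assms by (intro bij_betwI[where g="\<lambda>t. (t - a) / c"]) (auto simp: field_simps)
  have "filtermap (\<lambda>s. a + c * s) (at s within UNIV) = at (a + c * s) within range (\<lambda>s. a + c * s)"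
  proof (rule filtermap_linear_at_within[OF bij])
    show "isCont (\<lambda>s. a + c * s) s" by (intro continuous_intros)
    fix S :: "real set" assume "open S"
    then show "open ((\<lambda>s. a + c * s) ` S)" using open_affinity[of S c a] assms by simp
  qed
  moreover have "range (\<lambda>s. a + c * s) = UNIV" using bij by (simp add: bij_def)
  ultimately show ?thesis by simp
qed

lemma metric_deriv_affine_reparam:
  fixes \<gamma> :: "real \<Rightarrow> 'a::metric_space"
  assumes ab: "0 \<le> a" "a < b" "b \<le> 1" and s: "s \<in> {0<..<1}"
  shows "metric_deriv (\<lambda>s. \<gamma> (a + (b - a) * s)) s = ennreal (b - a) * metric_deriv \<gamma> (a + (b - a) * s)"
proof -
  define \<phi> where "\<phi> s = a + (b - a) * s" for s
  define t where "t = \<phi> s"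
  define h where "h z = ennreal (dist (\<gamma> z) (\<gamma> t) / \<bar>z - t\<bar>)" for z
  have "(b - a) * s < b - a" using mult_strict_left_mono[of s 1 "b - a"] ab s by simp
  moreover have "0 < (b - a) * s" using ab s by simp
  ultimately have "0 < a + (b - a) * s" "a + (b - a) * s < 1" using ab by linarith+
  then have t: "t \<in> {0<..<1}" unfolding t_def \<phi>_def by simp
  have quot: "ennreal (dist (\<gamma> (\<phi> y)) (\<gamma> (\<phi> s)) / \<bar>y - s\<bar>) = ennreal (b - a) * h (\<phi> y)" for y
  proof -
    have "\<bar>\<phi> y - t\<bar> = (b - a) * \<bar>y - s\<bar>" using ab unfolding t_def \<phi>_def
      by (simp add: abs_mult flip: right_diff_distrib)
    then have "dist (\<gamma> (\<phi> y)) (\<gamma> (\<phi> s)) / \<bar>y - s\<bar> = (b - a) * (dist (\<gamma> (\<phi> y)) (\<gamma> t) / \<bar>\<phi> y - t\<bar>)"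
      using ab by (simp add: t_def)
    then show ?thesis unfolding h_def using ab by (simp only:) (rule ennreal_mult; auto)
  qed
  have "metric_deriv (\<lambda>s. \<gamma> (\<phi> s)) s = Limsup (at s) (\<lambda>y. ennreal (b - a) * h (\<phi> y))"
    unfolding metric_deriv_def quot using s by (subst at_within_interior) auto
  also have "\<dots> = ennreal (b - a) * Limsup (at s) (\<lambda>y. h (\<phi> y))"
    by (rule Limsup_compose_continuous_mono)
       (auto intro!: ennreal_continuous_on_cmult continuous_on_id monoI mult_left_mono)
  also have "Limsup (at s) (\<lambda>y. h (\<phi> y)) = Limsup (filtermap \<phi> (at s)) h"
    by (rule Limsup_filtermap_eq[symmetric]) (use ab in \<open>auto simp: inj_def \<phi>_def\<close>)
  also have "filtermap \<phi> (at s) = at t"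
    unfolding \<phi>_def t_def using ab by (intro filtermap_affine_at) auto
  also have "Limsup (at t) h = metric_deriv \<gamma> t"
    unfolding metric_deriv_def h_def using t by (subst at_within_interior) auto
  finally show ?thesis by (simp add: \<phi>_def t_def)
qed

lemma affine_reparam_image:
  fixes a b :: real assumes "a \<le> b"
  shows "(\<lambda>s. a + (b - a) * s) ` {0..1} = {a..b}"
  using image_affinity_atLeastAtMost[of "b - a" a 0 1] assms by (simp add: add.commute)

lemma lip_curve_affine_reparam:
  assumes "lip_curve \<gamma>" and ab: "0 \<le> a" "a \<le> b" "b \<le> 1"
  shows "lip_curve (\<lambda>s. \<gamma> (a + (b - a) * s))"
proof -
  obtain L where L: "L-lipschitz_on {0..1} \<gamma>" using assms(1) unfolding lip_curve_def by auto
  have "(b - a)-lipschitz_on {0..1} (\<lambda>s. a + (b - a) * s)"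
    using ab by (intro lipschitz_onI) (auto simp: dist_real_def abs_mult simp flip: right_diff_distrib)
  moreover have "L-lipschitz_on ((\<lambda>s. a + (b - a) * s) ` {0..1}) \<gamma>"
    using affine_reparam_image[OF ab(2)] ab by (intro lipschitz_on_subset[OF L]) auto
  ultimately have "(L * (b - a))-lipschitz_on {0..1} (\<lambda>s. \<gamma> (a + (b - a) * s))"
    by (rule lipschitz_on_compose2)
  then show ?thesis unfolding lip_curve_def by blast
qed

lemma line_integral_affine_reparam:
  assumes lip: "lip_curve \<gamma>" and ab: "0 \<le> a" "a < b" "b \<le> 1" and \<rho>: "\<rho> \<in> borel_measurable borel"
  shows "line_integral \<rho> (\<lambda>s. \<gamma> (a + (b - a) * s)) =
    (\<integral>\<^sup>+ t \<in> {a..b}. \<rho> (\<gamma> t) * metric_deriv \<gamma> t \<partial>lborel)"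
proof -
  define G where "G t = \<rho> (\<gamma> t) * metric_deriv \<gamma> t * indicator {a..b} t" for t
  have G: "G \<in> borel_measurable borel" unfolding G_def
    using ab by (intro line_integrand_measurable[OF lip \<rho>]) auto
  have mem: "a + (b - a) * s \<in> {a..b} \<longleftrightarrow> s \<in> {0..1}" for s
    using inj_image_mem_iff[of "\<lambda>s. a + (b - a) * s" s "{0..1}"] affine_reparam_image[of a b] ab
    by (simp add: inj_def)
  have "line_integral \<rho> (\<lambda>s. \<gamma> (a + (b - a) * s)) = (\<integral>\<^sup>+ s. ennreal (b - a) * G (a + (b - a) * s) \<partial>lborel)"
    unfolding line_integral_def
  proof (rule nn_integral_cong_AE)
    have "AE s in lborel. s \<noteq> 0 \<and> s \<noteq> 1"
      using AE_lborel_singleton[of 0] AE_lborel_singleton[of 1] by eventually_elim auto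
    then show "AE s in lborel. \<rho> (\<gamma> (a + (b - a) * s)) * metric_deriv (\<lambda>s. \<gamma> (a + (b - a) * s)) s *
        indicator {0..1} s = ennreal (b - a) * G (a + (b - a) * s)"
    proof eventually_elim
      case (elim s)
      show ?case
      proof (cases "s \<in> {0..1}")
        case True
        then have "s \<in> {0<..<1}" using elim by auto
        then show ?thesis using True metric_deriv_affine_reparam[OF ab, of s \<gamma>] mem[of s]
          by (simp add: G_def mult.assoc mult.left_commute)
      next
        case False
        then show ?thesis using mem[of s] by (auto simp: G_def indicator_def)
      qed
    qed
  qed
  also have "\<dots> = ennreal (b - a) * (\<integral>\<^sup>+ s. G (a + (b - a) * s) \<partial>lborel)"
    by (intro nn_integral_cmult measurable_compose[OF _ G]) (simp add: measurable_lborel2)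
  also have "\<dots> = (\<integral>\<^sup>+ t. G t \<partial>lborel)"
    using nn_integral_real_affine[OF G, of "b - a" a] ab by simp
  finally show ?thesis unfolding G_def .
qed

text \<open>Apply the upper gradient inequality to the affine reparametrisation of the subarc over [0,1].\<close>

lemma upper_gradient_subarc_le:
  fixes f :: "'a::metric_space \<Rightarrow> 'c::metric_space"
  assumes ug: "upper_gradient U f \<rho>" and \<rho>: "\<rho> \<in> borel_measurable borel" and lip: "lip_curve \<gamma>"
    and ab: "0 \<le> a" "a \<le> b" "b \<le> 1" and sub: "\<gamma> ` {a..b} \<subseteq> U"
  shows "ennreal (dist (f (\<gamma> b)) (f (\<gamma> a))) \<le>
    (\<integral>\<^sup>+ t \<in> {a<..<b}. \<rho> (\<gamma> t) * indicator U (\<gamma> t) * metric_deriv \<gamma> t \<partial>lborel)"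
proof (cases "a = b")
  case False
  then have "a < b" using ab by simp
  define \<beta> where "\<beta> s = \<gamma> (a + (b - a) * s)" for s
  have "lip_curve \<beta>" unfolding \<beta>_def using lip_curve_affine_reparam[OF lip ab] .
  moreover have "\<beta> ` {0..1} = \<gamma> ` ((\<lambda>s. a + (b - a) * s) ` {0..1})"
    unfolding \<beta>_def by (simp add: image_image)
  then have "\<beta> ` {0..1} \<subseteq> U" using sub affine_reparam_image[OF ab(2)] by simp
  ultimately have "ennreal (dist (f (\<beta> 1)) (f (\<beta> 0))) \<le> line_integral \<rho> \<beta>"
    using ug unfolding upper_gradient_def by blast
  also have "\<dots> = (\<integral>\<^sup>+ t \<in> {a..b}. \<rho> (\<gamma> t) * metric_deriv \<gamma> t \<partial>lborel)"
    unfolding \<beta>_def using line_integral_affine_reparam[OF lip ab(1) \<open>a < b\<close> ab(3) \<rho>] .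
  also have "\<dots> = (\<integral>\<^sup>+ t \<in> {a<..<b}. \<rho> (\<gamma> t) * indicator U (\<gamma> t) * metric_deriv \<gamma> t \<partial>lborel)"
  proof (rule nn_integral_cong_AE)
    have "AE t in lborel. t \<noteq> a \<and> t \<noteq> b"
      using AE_lborel_singleton[of a] AE_lborel_singleton[of b] by eventually_elim auto
    then show "AE t in lborel. \<rho> (\<gamma> t) * metric_deriv \<gamma> t * indicator {a..b} t =
        \<rho> (\<gamma> t) * indicator U (\<gamma> t) * metric_deriv \<gamma> t * indicator {a<..<b} t"
      by eventually_elim (use sub in \<open>auto simp: indicator_def image_subset_iff\<close>)
  qed
  finally show ?thesis unfolding \<beta>_def by simp
qed simp

lemma modulus_infinite_line_integral_eq_0:
  assumes sets: "sets \<mu> = sets borel" and p: "p > 0" and g: "g \<in> borel_measurable borel"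
    and fin: "(\<integral>\<^sup>+ x. enn_powr (g x) p \<partial>\<mu>) < \<infinity>"
  shows "modulus \<mu> p {\<gamma>. lip_curve \<gamma> \<and> line_integral g \<gamma> = \<infinity>} = 0"
proof (rule modulus_eq_0I)
  fix e :: real assume e: "e > 0"
  define M where "M = enn2real (\<integral>\<^sup>+ x. enn_powr (g x) p \<partial>\<mu>)"
  have M: "(\<integral>\<^sup>+ x. enn_powr (g x) p \<partial>\<mu>) = ennreal M" "M \<ge> 0"
    using fin unfolding M_def by (simp_all add: less_top)
  define k where "k = (e / (M + 1)) powr (1/p)"
  have k: "k > 0" "k powr p = e / (M + 1)" unfolding k_def using e M p by (simp_all add: powr_powr)
  define \<rho> where "\<rho> x = ennreal k * g x" for x
  have "\<rho> \<in> borel_measurable borel" unfolding \<rho>_def using g by measurable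
  moreover have "1 \<le> line_integral \<rho> \<gamma>" if \<gamma>: "lip_curve \<gamma>" "line_integral g \<gamma> = \<infinity>" for \<gamma>
  proof -
    have "line_integral \<rho> \<gamma> = (\<integral>\<^sup>+ t. ennreal k * (g (\<gamma> t) * metric_deriv \<gamma> t * indicator {0..1} t) \<partial>lborel)"
      unfolding line_integral_def \<rho>_def by (simp add: mult.assoc)
    also have "\<dots> = ennreal k * line_integral g \<gamma>"
      unfolding line_integral_def using line_integrand_measurable[OF \<gamma>(1) g, of "{0..1}"]
      by (subst nn_integral_cmult) (auto simp: measurable_lborel2)
    also have "\<dots> = \<infinity>" using \<gamma> k by (simp add: ennreal_mult_top)
    finally show ?thesis by simp
  qed
  moreover have "(\<integral>\<^sup>+ x. enn_powr (\<rho> x) p \<partial>\<mu>) \<le> ennreal e"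
  proof -
    have "(\<integral>\<^sup>+ x. enn_powr (\<rho> x) p \<partial>\<mu>) = (\<integral>\<^sup>+ x. ennreal (k powr p) * enn_powr (g x) p \<partial>\<mu>)"
      unfolding \<rho>_def using k p by (simp add: enn_powr_cmult)
    also have "\<dots> = ennreal (k powr p) * ennreal M"
      using g M by (subst nn_integral_cmult) (auto simp: measurable_cong_sets[OF sets refl])
    also have "\<dots> = ennreal (e / (M + 1) * M)"
      using k M e by (subst ennreal_mult) auto
    also have "\<dots> \<le> ennreal e"
      using e M by (intro ennreal_leI) (simp add: field_simps)
    finally show ?thesis .
  qed
  ultimately show "\<exists>\<rho>. \<rho> \<in> borel_measurable borel \<and>
      (\<forall>\<gamma>\<in>{\<gamma>. lip_curve \<gamma> \<and> line_integral g \<gamma> = \<infinity>}. 1 \<le> line_integral \<rho> \<gamma>) \<and>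
      (\<integral>\<^sup>+ x. enn_powr (\<rho> x) p \<partial>\<mu>) \<le> ennreal e" by blast
qed

lemma nn_integral_diff_min_of_nat_less:
  assumes [measurable]: "G \<in> borel_measurable M" and fin: "(\<integral>\<^sup>+ x. G x \<partial>M) < \<infinity>" and "e > 0"
  obtains N :: nat where "(\<integral>\<^sup>+ x. G x - min (G x) (of_nat N) \<partial>M) < e"
proof -
  define h where "h n x = G x - min (G x) (of_nat n)" for n :: nat and x
  have [measurable]: "h n \<in> borel_measurable M" for n unfolding h_def by measurable
  have "decseq h"
    unfolding h_def by (intro decseq_SucI le_funI ennreal_minus_mono order_refl min.mono) simp
  moreover have "(\<integral>\<^sup>+ x. h n x \<partial>M) < \<infinity>" for n
    using fin by (rule le_less_trans[rotated]) (auto intro: nn_integral_mono simp: h_def)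
  ultimately have "(INF n. \<integral>\<^sup>+ x. h n x \<partial>M) = (\<integral>\<^sup>+ x. (INF n. h n x) \<partial>M)"
    by (intro nn_integral_monotone_convergence_INF_decseq[symmetric]) auto
  also have "\<dots> = 0"
  proof -
    have "AE x in M. G x \<noteq> \<infinity>" using fin by (intro nn_integral_PInf_AE) auto
    then have "AE x in M. (INF n. h n x) = 0"
    proof eventually_elim
      case (elim x)
      then have "G x < \<infinity>" by (simp add: less_top)
      then obtain n where "G x < of_nat n"
        using ennreal_Ex_less_of_nat[of "G x"] by (auto simp: infinity_ennreal_def)
      then have "h n x = 0" using \<open>G x < \<infinity>\<close> by (simp add: h_def diff_eq_0_iff_ennreal less_top)
      moreover have "(INF n. h n x) \<le> h n x" by (rule INF_lower) simp
      ultimately show ?case by simp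
    qed
    then show ?thesis by (simp add: nn_integral_cong_AE)
  qed
  finally have "(INF n. \<integral>\<^sup>+ x. h n x \<partial>M) < e" using \<open>e > 0\<close> by simp
  then show ?thesis using that by (auto simp: INF_less_iff h_def)
qed

text \<open>The part of \<open>G\<close> above a suitable height \<open>N\<close> has small integral; the part below contributes
 at most \<open>N \<cdot> M(A)\<close> on \<open>A\<close>.\<close>

lemma nn_integral_absolutely_continuous:
  assumes [measurable]: "G \<in> borel_measurable M" and fin: "(\<integral>\<^sup>+ x. G x \<partial>M) < \<infinity>" and e: "e > 0"
  obtains d where "d > 0"
    "\<And>A. A \<in> sets M \<Longrightarrow> emeasure M A < ennreal d \<Longrightarrow> (\<integral>\<^sup>+ x \<in> A. G x \<partial>M) < ennreal e"
proof -
  obtain N :: nat where N: "(\<integral>\<^sup>+ x. G x - min (G x) (of_nat N) \<partial>M) < ennreal (e / 2)"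
    using nn_integral_diff_min_of_nat_less[OF _ fin, of "ennreal (e / 2)"] e by auto
  define d where "d = e / (2 * (real N + 1))"
  have "d > 0" using e by (simp add: d_def)
  show ?thesis
  proof (rule that[OF \<open>d > 0\<close>])
    fix A assume A: "A \<in> sets M" "emeasure M A < ennreal d"
    have "(\<integral>\<^sup>+ x \<in> A. G x \<partial>M) \<le> (\<integral>\<^sup>+ x. (G x - min (G x) (of_nat N)) + of_nat N * indicator A x \<partial>M)"
    proof (rule nn_integral_mono)
      fix x
      have "G x = (G x - min (G x) (of_nat N)) + min (G x) (of_nat N)" by (simp add: diff_add_cancel_ennreal)
      also have "\<dots> \<le> (G x - min (G x) (of_nat N)) + of_nat N" by (intro add_left_mono) simp
      finally show "G x * indicator A x \<le> (G x - min (G x) (of_nat N)) + of_nat N * indicator A x"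
        by (cases "x \<in> A") auto
    qed
    also have "\<dots> = (\<integral>\<^sup>+ x. G x - min (G x) (of_nat N) \<partial>M) + of_nat N * emeasure M A"
      using A by (subst nn_integral_add) (auto simp: nn_integral_cmult_indicator)
    also have "\<dots> < ennreal (e / 2 + e / 2)"
    proof (rule add_mono_ennreal[OF N])
      have "of_nat N * emeasure M A \<le> of_nat N * ennreal d" using A by (intro mult_left_mono) auto
      also have "\<dots> = ennreal (real N * d)"
        using \<open>d > 0\<close> by (simp add: ennreal_mult ennreal_of_nat_eq_real_of_nat)
      also have "\<dots> < ennreal (e / 2)"
        using e unfolding d_def by (intro ennreal_lessI) (simp_all add: field_simps)
      finally show "of_nat N * emeasure M A < ennreal (e / 2)" .
    qed
    finally show "(\<integral>\<^sup>+ x \<in> A. G x \<partial>M) < ennreal e" by simp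
  qed
qed

lemma emeasure_lborel_UN_Ioo_le:
  fixes n :: nat
  assumes "\<And>i. i < n \<Longrightarrow> a i \<le> b i"
  shows "emeasure lborel (\<Union>i<n. {a i<..<b i}) \<le> ennreal (\<Sum>i<n. b i - a i)"
proof -
  have "emeasure lborel (\<Union>i<n. {a i<..<b i}) \<le> (\<Sum>i<n. emeasure lborel {a i<..<b i})"
    by (intro emeasure_subadditive_finite) auto
  also have "\<dots> = (\<Sum>i<n. ennreal (b i - a i))"
    using assms by (intro sum.cong) auto
  also have "\<dots> = ennreal (\<Sum>i<n. b i - a i)"
    using assms by (intro sum_ennreal) auto
  finally show ?thesis .
qed

lemma abs_continuous_on_if_dist_le_nn_integral:
  fixes \<phi> :: "real \<Rightarrow> 'b::metric_space"
  assumes H: "H \<in> borel_measurable borel" and fin: "(\<integral>\<^sup>+ t. H t \<partial>lborel) < \<infinity>"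
    and bound: "\<And>a b. a \<le> b \<Longrightarrow> {a..b} \<subseteq> S \<Longrightarrow> b - a < \<eta> \<Longrightarrow>
      ennreal (dist (\<phi> b) (\<phi> a)) \<le> (\<integral>\<^sup>+ t \<in> {a<..<b}. H t \<partial>lborel)"
    and "\<eta> > 0"
  shows "abs_continuous_on S \<phi>"
  unfolding abs_continuous_on_def
proof (intro allI impI)
  fix \<epsilon> :: real assume "\<epsilon> > 0"
  have [measurable]: "H \<in> borel_measurable lborel" using H by simp
  then obtain d where d: "d > 0"
    "\<And>A. A \<in> sets lborel \<Longrightarrow> emeasure lborel A < ennreal d \<Longrightarrow> (\<integral>\<^sup>+ t \<in> A. H t \<partial>lborel) < ennreal \<epsilon>"
    using nn_integral_absolutely_continuous[OF _ fin \<open>\<epsilon> > 0\<close>] by blast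
  show "\<exists>\<delta>>0. \<forall>(n::nat) a b. (\<forall>i<n. a i \<le> b i \<and> {a i..b i} \<subseteq> S) \<and>
      disjoint_family_on (\<lambda>i. {a i<..<b i}) {..<n} \<and> (\<Sum>i<n. b i - a i) < \<delta> \<longrightarrow>
      (\<Sum>i<n. dist (\<phi> (b i)) (\<phi> (a i))) < \<epsilon>"
  proof (intro exI[of _ "min d \<eta>"] conjI allI impI)
    show "0 < min d \<eta>" using d \<open>\<eta> > 0\<close> by simp
    fix n :: nat and a b :: "nat \<Rightarrow> real"
    assume "(\<forall>i<n. a i \<le> b i \<and> {a i..b i} \<subseteq> S) \<and>
      disjoint_family_on (\<lambda>i. {a i<..<b i}) {..<n} \<and> (\<Sum>i<n. b i - a i) < min d \<eta>"
    then have ab: "\<And>i. i < n \<Longrightarrow> a i \<le> b i \<and> {a i..b i} \<subseteq> S"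
      and disj: "disjoint_family_on (\<lambda>i. {a i<..<b i}) {..<n}"
      and sum: "(\<Sum>i<n. b i - a i) < min d \<eta>" by auto
    define U where "U = (\<Union>i<n. {a i<..<b i})"
    have "b i - a i < \<eta>" if "i < n" for i
      using member_le_sum[of i "{..<n}" "\<lambda>i. b i - a i"] ab sum that by force
    then have "(\<Sum>i<n. ennreal (dist (\<phi> (b i)) (\<phi> (a i)))) \<le> (\<Sum>i<n. \<integral>\<^sup>+ t \<in> {a i<..<b i}. H t \<partial>lborel)"
      using ab by (intro sum_mono bound) auto
    also have "\<dots> = (\<integral>\<^sup>+ t. (\<Sum>i<n. H t * indicator {a i<..<b i} t) \<partial>lborel)"
      by (intro nn_integral_sum[symmetric]) auto
    also have "\<dots> = (\<integral>\<^sup>+ t \<in> U. H t \<partial>lborel)"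
      unfolding U_def by (simp add: indicator_UN_disjoint[OF _ disj] sum_distrib_left)
    also have "\<dots> < ennreal \<epsilon>"
    proof (rule d(2))
      show "U \<in> sets lborel" unfolding U_def by auto
      have "emeasure lborel U \<le> ennreal (\<Sum>i<n. b i - a i)"
        unfolding U_def using ab by (intro emeasure_lborel_UN_Ioo_le) auto
      also have "\<dots> < ennreal d"
        using sum d by (intro ennreal_lessI) auto
      finally show "emeasure lborel U < ennreal d" .
    qed
    finally show "(\<Sum>i<n. dist (\<phi> (b i)) (\<phi> (a i))) < \<epsilon>"
      by (simp add: ennreal_less_iff sum_nonneg)
  qed
qed

text \<open>A Lebesgue number of the cover, pulled back to the parameter interval by uniform continuity.\<close>

lemma uniform_subarc_cover:
  fixes \<gamma> :: "real \<Rightarrow> 'a::metric_space"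
  assumes "continuous_on {0..1} \<gamma>" "\<gamma> ` {0..1} \<subseteq> \<Union>\<U>" "\<And>U. U \<in> \<U> \<Longrightarrow> open U"
  obtains \<eta> where "\<eta> > 0"
    "\<And>a b. 0 \<le> a \<Longrightarrow> a \<le> b \<Longrightarrow> b \<le> 1 \<Longrightarrow> b - a < \<eta> \<Longrightarrow> \<exists>U\<in>\<U>. \<gamma> ` {a..b} \<subseteq> U"
proof -
  obtain \<epsilon> where \<epsilon>: "\<epsilon> > 0" "\<And>x. x \<in> \<gamma> ` {0..1} \<Longrightarrow> \<exists>U\<in>\<U>. ball x \<epsilon> \<subseteq> U"
    using Heine_Borel_lemma[OF compact_continuous_image[OF assms(1) compact_Icc] assms(2,3)] by blast
  obtain \<eta> where \<eta>: "\<eta> > 0"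
    "\<And>s t. s \<in> {0..1} \<Longrightarrow> t \<in> {0..1} \<Longrightarrow> dist t s < \<eta> \<Longrightarrow> dist (\<gamma> t) (\<gamma> s) < \<epsilon>"
    using compact_uniformly_continuous[OF assms(1) compact_Icc] \<epsilon>(1)
    unfolding uniformly_continuous_on_def by metis
  show ?thesis
  proof (rule that[OF \<eta>(1)])
    fix a b :: real assume ab: "0 \<le> a" "a \<le> b" "b \<le> 1" "b - a < \<eta>"
    obtain U where "U \<in> \<U>" "ball (\<gamma> a) \<epsilon> \<subseteq> U" using \<epsilon>(2)[of "\<gamma> a"] ab by auto
    moreover have "\<gamma> ` {a..b} \<subseteq> ball (\<gamma> a) \<epsilon>"
    proof (intro image_subsetI)
      fix t assume "t \<in> {a..b}"
      then show "\<gamma> t \<in> ball (\<gamma> a) \<epsilon>" using \<eta>(2)[of a t] ab by (simp add: dist_real_def dist_commute)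
    qed
    ultimately show "\<exists>U\<in>\<U>. \<gamma> ` {a..b} \<subseteq> U" by blast
  qed
qed

lemma abs_continuous_on_comp_lip_curve:
  fixes f :: "'a::metric_space \<Rightarrow> 'c::metric_space"
  assumes lip: "lip_curve \<gamma>" and F: "finite F" and cover: "\<gamma> ` {0..1} \<subseteq> (\<Union>c\<in>F. ball c (r c))"
    and ug: "\<And>c. c \<in> F \<Longrightarrow> upper_gradient (ball c (r c)) f (\<rho> c)"
    and \<rho>: "\<And>c. c \<in> F \<Longrightarrow> \<rho> c \<in> borel_measurable borel"
    and fin: "\<And>c. c \<in> F \<Longrightarrow> line_integral (\<lambda>x. \<rho> c x * indicator (ball c (r c)) x) \<gamma> < \<infinity>"
  shows "abs_continuous_on {0..1} (f \<circ> \<gamma>)"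
proof -
  obtain \<eta> where \<eta>: "\<eta> > 0" "\<And>a b. 0 \<le> a \<Longrightarrow> a \<le> b \<Longrightarrow> b \<le> 1 \<Longrightarrow> b - a < \<eta> \<Longrightarrow>
      \<exists>U\<in>(\<lambda>c. ball c (r c)) ` F. \<gamma> ` {a..b} \<subseteq> U"
    using uniform_subarc_cover[OF lip_curve_continuous_on[OF lip], of "(\<lambda>c. ball c (r c)) ` F"] cover
    by auto
  define g where "g c t = \<rho> c (\<gamma> t) * indicator (ball c (r c)) (\<gamma> t) * metric_deriv \<gamma> t * indicator {0..1} t"
    for c t
  define H where "H t = (\<Sum>c\<in>F. g c t)" for t
  have g: "g c \<in> borel_measurable borel" if "c \<in> F" for c
  proof -
    have [measurable]: "\<rho> c \<in> borel_measurable borel" "ball c (r c) \<in> sets borel"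
      using \<rho>[OF that] by auto
    have "(\<lambda>x. \<rho> c x * indicator (ball c (r c)) x) \<in> borel_measurable borel" by measurable
    from line_integrand_measurable[OF lip this, of "{0..1}"] show ?thesis unfolding g_def by simp
  qed
  then have "H \<in> borel_measurable borel" unfolding H_def by (intro borel_measurable_sum) auto
  moreover have "(\<integral>\<^sup>+ t. H t \<partial>lborel) = (\<Sum>c\<in>F. \<integral>\<^sup>+ t. g c t \<partial>lborel)"
    unfolding H_def using g by (intro nn_integral_sum) auto
  then have "(\<integral>\<^sup>+ t. H t \<partial>lborel) < \<infinity>"
    using F fin unfolding line_integral_def g_def by (simp add: mult.assoc)
  moreover have "ennreal (dist ((f \<circ> \<gamma>) b) ((f \<circ> \<gamma>) a)) \<le> (\<integral>\<^sup>+ t \<in> {a<..<b}. H t \<partial>lborel)"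
    if ab: "a \<le> b" "{a..b} \<subseteq> {0..1}" "b - a < \<eta>" for a b
  proof -
    have "0 \<le> a" "b \<le> 1" using ab by auto
    then obtain c where c: "c \<in> F" "\<gamma> ` {a..b} \<subseteq> ball c (r c)" using \<eta>(2) ab by blast
    have "ennreal (dist (f (\<gamma> b)) (f (\<gamma> a))) \<le>
        (\<integral>\<^sup>+ t \<in> {a<..<b}. \<rho> c (\<gamma> t) * indicator (ball c (r c)) (\<gamma> t) * metric_deriv \<gamma> t \<partial>lborel)"
      using upper_gradient_subarc_le[OF ug[OF c(1)] \<rho>[OF c(1)] lip \<open>0 \<le> a\<close> ab(1) \<open>b \<le> 1\<close> c(2)] .
    also have "\<dots> \<le> (\<integral>\<^sup>+ t \<in> {a<..<b}. H t \<partial>lborel)"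
    proof (rule nn_integral_mono)
      fix t
      have "t \<in> {a<..<b} \<Longrightarrow> g c t \<le> H t"
        unfolding H_def using c(1) F by (intro member_le_sum) auto
      then show "\<rho> c (\<gamma> t) * indicator (ball c (r c)) (\<gamma> t) * metric_deriv \<gamma> t * indicator {a<..<b} t
          \<le> H t * indicator {a<..<b} t"
        using ab unfolding g_def by (auto simp: indicator_def)
    qed
    finally show ?thesis by simp
  qed
  ultimately show ?thesis using \<eta>(1) by (rule abs_continuous_on_if_dist_le_nn_integral)
qed

lemma proper_space_countable_ball_subcover:
  assumes proper: "proper_space TYPE('a::metric_space)" and r: "\<And>x::'a. r x > 0"
  obtains C where "countable C" "\<And>K. compact K \<Longrightarrow> \<exists>F\<subseteq>C. finite F \<and> K \<subseteq> (\<Union>c\<in>F. ball c (r c))"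
proof -
  fix x0 :: 'a
  have "\<exists>T. finite T \<and> cball x0 (real n) \<subseteq> (\<Union>c\<in>T. ball c (r c))" for n :: nat
  proof -
    have "compact (cball x0 (real n))" using proper unfolding proper_space_def by auto
    moreover have "cball x0 (real n) \<subseteq> (\<Union>c\<in>cball x0 (real n). ball c (r c))" using r by force
    ultimately show ?thesis by (meson compactE_image open_ball)
  qed
  then obtain T where T: "\<And>n. finite (T n)" "\<And>n. cball x0 (real n) \<subseteq> (\<Union>c\<in>T n. ball c (r c))"
    by metis
  show ?thesis
  proof (rule that)
    show "countable (\<Union>n. T n)" using T(1) by (intro countable_UN) (auto intro: countable_finite)
    fix K :: "'a set" assume "compact K"
    then obtain e where "\<forall>y\<in>K. dist x0 y \<le> e" using compact_imp_bounded bounded_any_center by metis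
    moreover obtain n :: nat where "e \<le> real n" using real_arch_simple by blast
    ultimately have "K \<subseteq> cball x0 (real n)" by force
    then show "\<exists>F\<subseteq>(\<Union>n. T n). finite F \<and> K \<subseteq> (\<Union>c\<in>F. ball c (r c))"
      using T[of n] by blast
  qed
qed

lemma proper_space_countable_dense:
  assumes "proper_space TYPE('a::metric_space)"
  obtains D :: "'a::metric_space set" where "countable D" "\<And>x e. e > 0 \<Longrightarrow> \<exists>y\<in>D. dist x y < e"
proof -
  have "\<exists>C::'a set. countable C \<and> (\<forall>x. \<exists>c\<in>C. dist x c < 1 / Suc m)" for m :: nat
  proof -
    obtain C :: "'a set" where C: "countable C" "\<And>K. compact K \<Longrightarrow> \<exists>F\<subseteq>C. finite F \<and> K \<subseteq> (\<Union>c\<in>F. ball c (1 / Suc m))"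
      by (rule proper_space_countable_ball_subcover[OF assms, where r="\<lambda>_. 1 / Suc m"]) auto
    have "\<exists>c\<in>C. dist x c < 1 / Suc m" for x
    proof -
      obtain F where "F \<subseteq> C" "{x} \<subseteq> (\<Union>c\<in>F. ball c (1 / Suc m))" using C(2)[of "{x}"] by auto
      then show ?thesis by (auto simp: dist_commute)
    qed
    then show ?thesis using C(1) by blast
  qed
  then obtain C :: "nat \<Rightarrow> 'a set" where C: "\<And>m. countable (C m)" "\<And>m x. \<exists>c\<in>C m. dist x c < 1 / Suc m"
    by metis
  show ?thesis
  proof (rule that)
    show "countable (\<Union>m. C m)" using C(1) by auto
    fix x :: 'a and e :: real assume "e > 0"
    then obtain m where "1 / real (Suc m) < e" using nat_approx_posE by blast
    then show "\<exists>y\<in>(\<Union>m. C m). dist x y < e" using C(2)[of m x] by force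
  qed
qed

lemma modulus_non_abs_continuous_eq_0:
  fixes f :: "'a::metric_space \<Rightarrow> 'c::metric_space"
  assumes proper: "proper_space TYPE('a)" and sets: "sets \<mu> = sets borel" and p: "p > 0"
    and r: "\<And>x. r x > 0"
    and \<rho>: "\<And>x. \<rho> x \<in> borel_measurable borel" "\<And>x. upper_gradient (ball x (r x)) f (\<rho> x)"
      "\<And>x. (\<integral>\<^sup>+ y \<in> ball x (r x). enn_powr (\<rho> x y) p \<partial>\<mu>) < \<infinity>"
  shows "modulus \<mu> p {\<gamma>. lip_curve \<gamma> \<and> \<not> abs_continuous_on {0..1} (f \<circ> \<gamma>)} = 0"
proof -
  define g where "g c y = \<rho> c y * indicator (ball c (r c)) y" for c y
  define \<Gamma> where "\<Gamma> c = {\<gamma>. lip_curve \<gamma> \<and> line_integral (g c) \<gamma> = \<infinity>}" for c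
  have null: "modulus \<mu> p (\<Gamma> c) = 0" for c
  proof -
    have [measurable]: "\<rho> c \<in> borel_measurable borel" "ball c (r c) \<in> sets borel" using \<rho>(1) by auto
    have "g c \<in> borel_measurable borel" unfolding g_def by measurable
    moreover have "(\<integral>\<^sup>+ y. enn_powr (g c y) p \<partial>\<mu>) < \<infinity>"
      unfolding g_def using \<rho>(3)[of c] p by (simp add: enn_powr_mult_indicator)
    ultimately show ?thesis unfolding \<Gamma>_def by (rule modulus_infinite_line_integral_eq_0[OF sets p])
  qed
  obtain C :: "'a set"
    where C: "countable C" "\<And>K. compact K \<Longrightarrow> \<exists>F\<subseteq>C. finite F \<and> K \<subseteq> (\<Union>c\<in>F. ball c (r c))"
    by (rule proper_space_countable_ball_subcover[OF proper, where r=r]) (use r in auto)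
  have "{\<gamma>. lip_curve \<gamma> \<and> \<not> abs_continuous_on {0..1} (f \<circ> \<gamma>)} \<subseteq> (\<Union>c\<in>C. \<Gamma> c)"
  proof (intro subsetI CollectI, elim CollectE conjE, rule ccontr)
    fix \<gamma> assume \<gamma>: "lip_curve \<gamma>" "\<not> abs_continuous_on {0..1} (f \<circ> \<gamma>)" "\<gamma> \<notin> (\<Union>c\<in>C. \<Gamma> c)"
    obtain F where F: "F \<subseteq> C" "finite F" "\<gamma> ` {0..1} \<subseteq> (\<Union>c\<in>F. ball c (r c))"
      using C(2) compact_continuous_image[OF lip_curve_continuous_on[OF \<gamma>(1)] compact_Icc] by blast
    have "line_integral (g c) \<gamma> < \<infinity>" if "c \<in> F" for c
      using \<gamma> F(1) that unfolding \<Gamma>_def by (auto simp: top.not_eq_extremum)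
    then have "abs_continuous_on {0..1} (f \<circ> \<gamma>)"
      using abs_continuous_on_comp_lip_curve[OF \<gamma>(1) F(2,3) \<rho>(2) \<rho>(1)] unfolding g_def by blast
    with \<gamma>(2) show False ..
  qed
  then have "modulus \<mu> p {\<gamma>. lip_curve \<gamma> \<and> \<not> abs_continuous_on {0..1} (f \<circ> \<gamma>)} \<le> modulus \<mu> p (\<Union>c\<in>C. \<Gamma> c)"
    by (rule modulus_mono)
  also have "\<dots> = 0" using modulus_UN_countable_eq_0[OF sets p C(1) null] .
  finally show ?thesis by simp
qed

definition grid_box :: "nat \<Rightarrow> nat \<Rightarrow> 'a::metric_space list \<Rightarrow> nat \<Rightarrow> (real \<Rightarrow> 'a) set" where
  "grid_box L N xs m = {\<beta>. (real L)-lipschitz_on {0..1} \<beta> \<and> length xs = Suc N \<and>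
     (\<forall>k\<le>N. dist (\<beta> (real k / real N)) (xs ! k) < 1 / Suc m)}"

lemma unit_interval_grid_point_near:
  fixes t :: real assumes t: "t \<in> {0..1}" and N: "N > 0"
  obtains k where "k \<le> N" "\<bar>t - real k / real N\<bar> \<le> 1 / real N"
proof
  define k where "k = nat \<lfloor>t * real N\<rfloor>"
  have "0 \<le> t * real N" "t * real N \<le> real N" using t by (auto simp: mult_left_le_one_le)
  then have k: "real k \<le> t * real N" "t * real N < real k + 1" "real k \<le> real N"
    unfolding k_def by linarith+
  then show "k \<le> N" by simp
  have "t - real k / real N = (t * real N - real k) / real N" using N by (simp add: field_simps)
  then show "\<bar>t - real k / real N\<bar> \<le> 1 / real N"
    using k N by (simp add: divide_right_mono)
qed

lemma grid_box_subset_curve_ball: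
  assumes \<gamma>: "\<gamma> \<in> grid_box L N xs m" and N: "N > 0" and \<delta>: "\<delta> > 0"
    and LN: "real L / real N \<le> \<delta> / 8" and m: "1 / real (Suc m) \<le> \<delta> / 8"
  shows "grid_box L N xs m \<subseteq> curve_ball \<gamma> \<delta>"
proof
  fix \<beta> assume \<beta>: "\<beta> \<in> grid_box L N xs m"
  have lip: "(real L)-lipschitz_on {0..1} \<gamma>" "(real L)-lipschitz_on {0..1} \<beta>"
    using \<gamma> \<beta> unfolding grid_box_def by auto
  have "dist (\<gamma> t) (\<beta> t) \<le> \<delta> / 2" if t: "t \<in> {0..1}" for t
  proof -
    obtain k where k: "k \<le> N" "\<bar>t - real k / real N\<bar> \<le> 1 / real N"
      using unit_interval_grid_point_near[OF t N] .
    define s where "s = real k / real N"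
    have s: "s \<in> {0..1}" using k N unfolding s_def by auto
    have near: "dist (c t) (c s) \<le> real L / real N" if "(real L)-lipschitz_on {0..1} c" for c :: "real \<Rightarrow> 'a"
    proof -
      have "dist (c t) (c s) \<le> real L * dist t s" using lipschitz_onD[OF that t s] .
      also have "\<dots> \<le> real L * (1 / real N)" using k(2) by (intro mult_left_mono) (auto simp: s_def dist_real_def)
      finally show ?thesis by simp
    qed
    have "dist (\<gamma> t) (\<beta> t) \<le> dist (\<gamma> t) (\<gamma> s) + dist (\<gamma> s) (xs ! k) + dist (xs ! k) (\<beta> s) + dist (\<beta> s) (\<beta> t)"
      by (smt (verit) dist_triangle)
    also have "\<dots> \<le> real L / real N + 1 / Suc m + 1 / Suc m + real L / real N"
      using near[OF lip(1)] near[OF lip(2)] \<gamma> \<beta> k(1) unfolding grid_box_def s_def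
      by (intro add_mono) (auto simp: dist_commute)
    also have "\<dots> \<le> \<delta> / 2" using LN m by linarith
    finally show ?thesis .
  qed
  then have "(SUP t\<in>{0..1}. dist (\<gamma> t) (\<beta> t)) \<le> \<delta> / 2" by (intro cSUP_least) auto
  also have "\<dots> < \<delta>" using \<delta> by simp
  finally show "\<beta> \<in> curve_ball \<gamma> \<delta>" unfolding curve_ball_def lip_curve_def using lip(2) by blast
qed

lemma grid_box_around_lip_curve:
  assumes D: "\<And>x e. e > 0 \<Longrightarrow> \<exists>y\<in>D. dist x y < e" and "lip_curve \<gamma>" and \<delta>: "\<delta> > 0"
  obtains L N xs m where "xs \<in> lists D" "\<gamma> \<in> grid_box L N xs m" "grid_box L N xs m \<subseteq> curve_ball \<gamma> \<delta>"
proof -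
  obtain L0 where "L0-lipschitz_on {0..1} \<gamma>" using \<open>lip_curve \<gamma>\<close> unfolding lip_curve_def by auto
  define L where "L = nat \<lceil>L0\<rceil>"
  have L: "(real L)-lipschitz_on {0..1} \<gamma>"
    unfolding L_def by (rule lipschitz_on_mono[OF \<open>L0-lipschitz_on {0..1} \<gamma>\<close>]) (auto simp: real_nat_ceiling_ge)
  define N where "N = nat \<lceil>8 * real L / \<delta>\<rceil> + 1"
  have N: "N > 0" unfolding N_def by simp
  have "8 * real L / \<delta> \<le> real N" unfolding N_def by linarith
  then have LN: "real L / real N \<le> \<delta> / 8" using N \<delta> by (simp add: field_simps)
  define m where "m = nat \<lceil>8 / \<delta>\<rceil>"
  have "8 / \<delta> \<le> real (Suc m)" unfolding m_def by linarith
  then have m: "1 / real (Suc m) \<le> \<delta> / 8" using \<delta> by (simp add: field_simps)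
  define pick where "pick k = (SOME y. y \<in> D \<and> dist (\<gamma> (real k / real N)) y < 1 / Suc m)" for k :: nat
  have pick: "pick k \<in> D \<and> dist (\<gamma> (real k / real N)) (pick k) < 1 / Suc m" for k
    unfolding pick_def by (rule someI_ex) (use D[of "1 / Suc m" "\<gamma> (real k / real N)"] in auto)
  define xs where "xs = map pick [0..<Suc N]"
  have xs: "xs \<in> lists D" unfolding xs_def using pick by auto
  have box: "\<gamma> \<in> grid_box L N xs m"
    unfolding grid_box_def xs_def using L pick by (auto simp del: upt_Suc simp: nth_append)
  show ?thesis by (rule that[OF xs box grid_box_subset_curve_ball[OF box N \<delta> LN m]])
qed

lemma ess_length_gt_curve_length_obtains_null_grid_box:
  assumes D: "\<And>x e. e > 0 \<Longrightarrow> \<exists>y\<in>D. dist x y < e" and \<gamma>: "lip_curve \<gamma>" "\<delta> > 0"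
    and gt: "curve_length 0 1 (u \<circ> \<gamma>) < ess_length \<mu> p u (curve_ball \<gamma> \<delta>)"
  obtains L N xs m and q :: rat where "xs \<in> lists D" "\<gamma> \<in> grid_box L N xs m"
    "curve_length 0 1 (u \<circ> \<gamma>) < ennreal (of_rat q)"
    "modulus \<mu> p {\<beta> \<in> grid_box L N xs m. curve_length 0 1 (u \<circ> \<beta>) < ennreal (of_rat q)} = 0"
proof -
  obtain \<Gamma>0 where \<Gamma>0: "modulus \<mu> p \<Gamma>0 = 0"
    and lt: "curve_length 0 1 (u \<circ> \<gamma>) < (INF \<beta>\<in>curve_ball \<gamma> \<delta> - \<Gamma>0. curve_length 0 1 (u \<circ> \<beta>))"
    using gt unfolding ess_length_def less_SUP_iff by blast
  obtain q :: rat where q: "curve_length 0 1 (u \<circ> \<gamma>) < ennreal (of_rat q)"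
    "ennreal (of_rat q) < (INF \<beta>\<in>curve_ball \<gamma> \<delta> - \<Gamma>0. curve_length 0 1 (u \<circ> \<beta>))"
    using ennreal_rat_dense[OF lt] by blast
  obtain L N xs m where box: "xs \<in> lists D" "\<gamma> \<in> grid_box L N xs m" "grid_box L N xs m \<subseteq> curve_ball \<gamma> \<delta>"
    by (rule grid_box_around_lip_curve[OF D \<gamma>]) blast
  have "{\<beta> \<in> grid_box L N xs m. curve_length 0 1 (u \<circ> \<beta>) < ennreal (of_rat q)} \<subseteq> \<Gamma>0"
  proof (intro subsetI, elim CollectE conjE, rule ccontr)
    fix \<beta> assume \<beta>: "\<beta> \<in> grid_box L N xs m" "curve_length 0 1 (u \<circ> \<beta>) < ennreal (of_rat q)" "\<beta> \<notin> \<Gamma>0"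
    then have "(INF \<beta>\<in>curve_ball \<gamma> \<delta> - \<Gamma>0. curve_length 0 1 (u \<circ> \<beta>)) \<le> curve_length 0 1 (u \<circ> \<beta>)"
      using box(3) by (intro INF_lower) auto
    with q(2) \<beta>(2) show False by simp
  qed
  then have "modulus \<mu> p {\<beta> \<in> grid_box L N xs m. curve_length 0 1 (u \<circ> \<beta>) < ennreal (of_rat q)} = 0"
    using modulus_mono \<Gamma>0 by (metis le_zero_eq)
  with box(1,2) q(1) that show ?thesis by blast
qed

text \<open>No property of \<open>u\<close> is needed here: the statement only uses the separability of X.\<close>

lemma modulus_ess_length_gt_eq_0:
  fixes u :: "'a::metric_space \<Rightarrow> 'b::metric_space"
  assumes proper: "proper_space TYPE('a)" and sets: "sets \<mu> = sets borel" and p: "p > 0"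
  shows "modulus \<mu> p {\<gamma>. lip_curve \<gamma> \<and>
    (\<exists>\<delta>>0. curve_length 0 1 (u \<circ> \<gamma>) < ess_length \<mu> p u (curve_ball \<gamma> \<delta>))} = 0"
proof -
  obtain D :: "'a set" where D: "countable D" "\<And>x e. e > 0 \<Longrightarrow> \<exists>y\<in>D. dist x y < e"
    using proper_space_countable_dense[OF proper] by blast
  define A where "A = (\<lambda>(L, N, xs, m, q). {\<beta> \<in> grid_box L N xs m. curve_length 0 1 (u \<circ> \<beta>) < ennreal (of_rat q)})"
  define I where "I = {i \<in> UNIV \<times> UNIV \<times> lists D \<times> UNIV \<times> (UNIV :: rat set). modulus \<mu> p (A i) = 0}"
  have "countable I"
    by (rule countable_subset[of _ "UNIV \<times> UNIV \<times> lists D \<times> UNIV \<times> (UNIV :: rat set)"])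
       (use D(1) in \<open>auto simp: I_def\<close>)
  then have null: "modulus \<mu> p (\<Union>i\<in>I. A i) = 0"
    by (rule modulus_UN_countable_eq_0[OF sets p]) (simp add: I_def)
  have "\<gamma> \<in> (\<Union>i\<in>I. A i)"
    if \<gamma>: "lip_curve \<gamma>" "\<delta> > 0" "curve_length 0 1 (u \<circ> \<gamma>) < ess_length \<mu> p u (curve_ball \<gamma> \<delta>)"
    for \<gamma> \<delta>
  proof -
    obtain L N xs m q where "xs \<in> lists D" "\<gamma> \<in> grid_box L N xs m"
      "curve_length 0 1 (u \<circ> \<gamma>) < ennreal (of_rat q)" "modulus \<mu> p (A (L, N, xs, m, q)) = 0"
      by (rule ess_length_gt_curve_length_obtains_null_grid_box[OF D(2) \<gamma>]) (auto simp: A_def)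
    then show ?thesis unfolding I_def by (intro UN_I[of "(L, N, xs, m, q)"]) (auto simp: A_def)
  qed
  then have "{\<gamma>. lip_curve \<gamma> \<and> (\<exists>\<delta>>0. curve_length 0 1 (u \<circ> \<gamma>) < ess_length \<mu> p u (curve_ball \<gamma> \<delta>))}
      \<subseteq> (\<Union>i\<in>I. A i)" by blast
  from modulus_mono[OF this, of \<mu> p] null show ?thesis by simp
qed

lemma abs_continuous_on_isometric_comp_iff:
  "isometric \<iota> \<Longrightarrow> abs_continuous_on S (\<iota> \<circ> c) \<longleftrightarrow> abs_continuous_on S c"
  unfolding abs_continuous_on_def isometric_def by simp

theorem proposition5p5:
  fixes \<mu> :: "'a::metric_space measure"
    and u :: "'a \<Rightarrow> 'b::complete_space"
    and \<iota> :: "'b \<Rightarrow> 'c::banach"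
    and p :: real
  assumes "metric_measure_space \<mu>"
    and "p \<ge> 1"
    and "isometric \<iota>"
    and "newtonian_loc \<mu> p (\<iota> \<circ> u)"
  shows "\<exists>\<Gamma>0. modulus \<mu> p \<Gamma>0 = 0 \<and> (\<forall>\<gamma>. lip_curve \<gamma> \<and> \<gamma> \<notin> \<Gamma>0 \<longrightarrow> regular_curve \<mu> p u \<gamma>)"
proof -
  have proper: "proper_space TYPE('a)" and sets: "sets \<mu> = sets borel"
    using assms(1) unfolding metric_measure_space_def by auto
  have p: "p > 0" using assms(2) by simp
  obtain r where r: "\<And>x. r x > 0" "\<And>x. newtonian \<mu> p (ball x (r x)) (\<iota> \<circ> u)"
    using assms(4) unfolding newtonian_loc_def by metis
  then obtain \<rho> where \<rho>: "\<And>x. \<rho> x \<in> borel_measurable borel" "\<And>x. upper_gradient (ball x (r x)) (\<iota> \<circ> u) (\<rho> x)"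
    "\<And>x. (\<integral>\<^sup>+ y \<in> ball x (r x). enn_powr (\<rho> x y) p \<partial>\<mu>) < \<infinity>"
    unfolding newtonian_def by metis
  define \<Gamma>ac where "\<Gamma>ac = {\<gamma>. lip_curve \<gamma> \<and> \<not> abs_continuous_on {0..1} (\<iota> \<circ> u \<circ> \<gamma>)}"
  define \<Gamma>ess where "\<Gamma>ess = {\<gamma>. lip_curve \<gamma> \<and>
    (\<exists>\<delta>>0. curve_length 0 1 (u \<circ> \<gamma>) < ess_length \<mu> p u (curve_ball \<gamma> \<delta>))}"
  have "modulus \<mu> p (\<Gamma>ac \<union> \<Gamma>ess) = 0"
    unfolding \<Gamma>ac_def \<Gamma>ess_def
    by (intro modulus_Un_eq_0[OF sets p] modulus_non_abs_continuous_eq_0[OF proper sets p r(1) \<rho>]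
        modulus_ess_length_gt_eq_0[OF proper sets p])
  moreover have "regular_curve \<mu> p u \<gamma>" if \<gamma>: "lip_curve \<gamma>" "\<gamma> \<notin> \<Gamma>ac \<union> \<Gamma>ess" for \<gamma>
  proof -
    have "abs_continuous_on {0..1} (u \<circ> \<gamma>)"
      using \<gamma> abs_continuous_on_isometric_comp_iff[OF assms(3)] unfolding \<Gamma>ac_def by (simp add: comp_assoc)
    moreover have "\<not> curve_length 0 1 (u \<circ> \<gamma>) < ess_length \<mu> p u (curve_ball \<gamma> \<delta>)" if "\<delta> > 0" for \<delta>
      using \<gamma> that unfolding \<Gamma>ess_def by blast
    ultimately show ?thesis using \<gamma>(1) unfolding regular_curve_def by (simp add: not_less)
  qed
  ultimately show ?thesis by blast
qed

end
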